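(* Let $n\ge 3$, $0<m<\frac{n-2}{n}$, $m\ne\frac{n-2}{n+2}$, $\lambda>0$, $\beta>0$. Let $v$ be the radially symmetric solution described in the context, $w(s)=r^2v(r)^{1-m}$ with $s=\log r$, $h(s)=w(s)-\frac{2(n-1)(n-2-nm)}{(1-m)\beta}s$, $h_1(s)=h(s)+\frac{(n-1)[n-2-(n+2)m]}{(1-m)\beta}\log s$, $K(\lambda,\beta)=\lim_{s\to\infty}h_1(s)$ (a finite limit), and \[ h_2(s)=h_1(s)-K(\lambda,\beta)-\frac{(n-1)(n-2-(n+2)m)^2}{2(n-2-nm)(1-m)\beta}\cdot\frac{1+\log s}{s}. \] Let \[ a_1(\lambda,\beta)=\frac{2(1-2m)(n-1)(n-2-nm)}{(1-m)^2}+\frac{(n-1)(n-2-(n+2)m)^2}{(1-m)^2}+\frac{n-2-(n+2)m}{1-m}K(\lambda,\beta)\beta . \] Then \[ \lim_{s\to\infty}s^2h_{2,s}(s)=\frac{(1-m)a_1(\lambda,\beta)}{2(n-2-nm)\beta}. \]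
   Context: $v=v(r)$, $r=|x|$, is the unique radially symmetric positive classical solution of $\frac{n-1}{m}\Delta v^m+\frac{2\beta}{1-m}v+\beta x\cdot\nabla v=0$ in $\mathbb{R}^n$ with $v(0)=\lambda$. $h_{2,s}$ denotes the derivative of $h_2$ in $s$. *)

theory Defs
  imports "HOL-Analysis.Analysis"
begin

text \<open>Radial form of the equation
  (n-1)/m \<Delta>(v^m) + 2\<beta>/(1-m) v + \<beta> x\<cdot>\<nabla>v = 0 in R^n, v(0) = \<lambda>,
  for a positive radially symmetric classical solution v(x) = v(|x|).
  With r = |x|: \<Delta>f = f'' + (n-1)/r f', x\<cdot>\<nabla>v = r v'.
  Regularity at the origin: v continuous on [0,\<infinity>) and v'(r) \<rightarrow> 0 as r \<rightarrow> 0+.\<close>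
definition radial_sol :: "nat \<Rightarrow> real \<Rightarrow> real \<Rightarrow> real \<Rightarrow> (real \<Rightarrow> real) \<Rightarrow> bool" where
  "radial_sol n m \<beta> lam v \<longleftrightarrow>
     (\<forall>r\<ge>0. v r > 0) \<and> v 0 = lam \<and> continuous_on {0..} v \<and>
     (\<exists>v1 u1 u2.
        (\<forall>r>0. (v has_real_derivative v1 r) (at r) \<and>
               ((\<lambda>t. v t powr m) has_real_derivative u1 r) (at r) \<and>
               (u1 has_real_derivative u2 r) (at r) \<and>
               (real n - 1) / m * (u2 r + (real n - 1) / r * u1 r)
                 + 2 * \<beta> / (1 - m) * v r + \<beta> * r * v1 r = 0) \<and>
        (v1 \<longlongrightarrow> 0) (at_right 0))"

definition w_fun :: "real \<Rightarrow> (real \<Rightarrow> real) \<Rightarrow> real \<Rightarrow> real" where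
  "w_fun m v s = (exp s)\<^sup>2 * (v (exp s)) powr (1 - m)"

definition h_fun :: "nat \<Rightarrow> real \<Rightarrow> real \<Rightarrow> (real \<Rightarrow> real) \<Rightarrow> real \<Rightarrow> real" where
  "h_fun n m \<beta> v s = w_fun m v s
     - 2 * (real n - 1) * (real n - 2 - real n * m) / ((1 - m) * \<beta>) * s"

definition h1_fun :: "nat \<Rightarrow> real \<Rightarrow> real \<Rightarrow> (real \<Rightarrow> real) \<Rightarrow> real \<Rightarrow> real" where
  "h1_fun n m \<beta> v s = h_fun n m \<beta> v s
     + (real n - 1) * (real n - 2 - (real n + 2) * m) / ((1 - m) * \<beta>) * ln s"

definition h2_fun :: "nat \<Rightarrow> real \<Rightarrow> real \<Rightarrow> (real \<Rightarrow> real) \<Rightarrow> real \<Rightarrow> real \<Rightarrow> real" where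
  "h2_fun n m \<beta> v K s = h1_fun n m \<beta> v s - K
     - (real n - 1) * (real n - 2 - (real n + 2) * m)\<^sup>2
         / (2 * (real n - 2 - real n * m) * (1 - m) * \<beta>) * ((1 + ln s) / s)"

definition a1_fun :: "nat \<Rightarrow> real \<Rightarrow> real \<Rightarrow> real \<Rightarrow> real" where
  "a1_fun n m \<beta> K =
     2 * (1 - 2 * m) * (real n - 1) * (real n - 2 - real n * m) / (1 - m)\<^sup>2
     + (real n - 1) * (real n - 2 - (real n + 2) * m)\<^sup>2 / (1 - m)\<^sup>2
     + (real n - 2 - (real n + 2) * m) / (1 - m) * K * \<beta>"

end

theory Submission
  imports Defs "HOL-Real_Asymp.Real_Asymp"
begin

text \<open>In the variable \<open>s = log r\<close>, with \<open>y = r v'/v + 2/(1 - m)\<close>, the radial equation becomes the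
  autonomous system \<open>w' = (1 - m) w y\<close>, \<open>y' = - y (\<gamma> w + m y + c) + C\<^sub>0\<close> with \<open>\<gamma> = \<beta>/(n - 1)\<close>.
  The hypothesis on \<open>h\<^sub>1\<close> says \<open>w = A s - c\<^sub>1 log s + K + o(1)\<close>, so \<open>\<gamma> w \<rightarrow> \<infinity>\<close> acts as a damping:
  a function satisfying \<open>f' = - \<gamma> w f + g\<close> with \<open>g = o(\<gamma> w)\<close> tends to \<open>0\<close>, as \<open>f\<^sup>2\<close> is a Lyapunov
  function. Applied successively, this gives \<open>y \<rightarrow> 0\<close>, \<open>w' \<rightarrow> A\<close>, \<open>s (w' - A) \<rightarrow> - c\<^sub>1\<close> and finally
  the limit of \<open>s\<^sup>2 (w' - A) + c\<^sub>1 s + (c\<^sub>1\<^sup>2/A) log s\<close>, which is \<open>s\<^sup>2 h\<^sub>2'(s)\<close>.\<close>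

lemma stays_below_if_decreasing_above:
  fixes F F' :: "real \<Rightarrow> real"
  assumes F_deriv: "\<And>s. s \<ge> t \<Longrightarrow> (F has_real_derivative F' s) (at s)"
    and decreasing: "\<And>s. s \<ge> t \<Longrightarrow> F s > th \<Longrightarrow> F' s < 0"
    and "F t \<le> th" and "t \<le> s"
  shows "F s \<le> th"
proof (rule ccontr)
  assume "\<not> F s \<le> th"
  define T where "T = {t..s} \<inter> F -` {..th}"
  have "continuous_on {t..s} F"
    by (meson F_deriv DERIV_continuous atLeastAtMost_iff continuous_at_imp_continuous_on)
  then have "closed T"
    unfolding T_def by (intro continuous_closed_preimage) auto
  moreover have "t \<in> T" "bdd_above T"
    using assms(3,4) by (auto simp: T_def)
  ultimately have "Sup T \<in> T"
    using closed_contains_Sup by blast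
  with \<open>\<not> F s \<le> th\<close> have a: "t \<le> Sup T" "Sup T < s" "F (Sup T) \<le> th"
    by (auto simp: T_def order.order_iff_strict)
  then obtain z where z: "Sup T < z" "z < s" "F s - F (Sup T) = (s - Sup T) * F' z"
    using MVT2[of "Sup T" s F F'] F_deriv by (metis order_trans)
  have "z \<notin> T"
    using z cSup_upper[OF _ \<open>bdd_above T\<close>] by force
  then have "F' z < 0"
    using decreasing z a by (auto simp: T_def)
  then show False
    using z a \<open>\<not> F s \<le> th\<close> by (smt (verit) mult_pos_neg)
qed

lemma eventually_below_if_decreasing_above:
  fixes F F' :: "real \<Rightarrow> real"
  assumes F_deriv: "\<And>s. s \<ge> s0 \<Longrightarrow> (F has_real_derivative F' s) (at s)"
    and nonneg: "\<And>s. s \<ge> s0 \<Longrightarrow> F s \<ge> 0"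
    and decreasing: "\<And>s. s \<ge> s0 \<Longrightarrow> F s > th \<Longrightarrow> F' s \<le> - k" and "k > 0"
  shows "\<exists>t. \<forall>s\<ge>t. F s \<le> th"
proof -
  have "\<exists>t\<ge>s0. F t \<le> th"
  proof (rule ccontr)
    assume "\<not> (\<exists>t\<ge>s0. F t \<le> th)"
    define b where "b = s0 + F s0 / k + 1"
    have "s0 < b"
      using nonneg[of s0] \<open>k > 0\<close> by (simp add: b_def add_nonneg_pos)
    then obtain z where z: "s0 < z" "z < b" "F b - F s0 = (b - s0) * F' z"
      using MVT2[of s0 b F F'] F_deriv by auto
    have "F' z \<le> - k"
      using decreasing[of z] z(1) \<open>\<not> (\<exists>t\<ge>s0. F t \<le> th)\<close> by (meson less_imp_le not_le)
    then have "(b - s0) * F' z \<le> (b - s0) * (- k)"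
      using \<open>s0 < b\<close> by (intro mult_left_mono) auto
    also have "\<dots> = - F s0 - k"
      using \<open>k > 0\<close> by (simp add: b_def field_simps)
    finally show False
      using z nonneg[of b] \<open>s0 < b\<close> \<open>k > 0\<close> by linarith
  qed
  then obtain t where "t \<ge> s0" "F t \<le> th" by blast
  then have "F s \<le> th" if "s \<ge> t" for s
    using stays_below_if_decreasing_above[of t F F' th s] F_deriv decreasing \<open>k > 0\<close> that
    by (smt (verit))
  then show ?thesis by blast
qed

text \<open>Once \<open>\<bar>g\<bar> \<le> \<mu> e/4\<close>, the Lyapunov function \<open>y\<^sup>2\<close> decreases at the uniform rate \<open>M (e/2)\<^sup>2\<close>
  as long as \<open>\<bar>y\<bar> > e/2\<close>.\<close>
lemma damped_linear_tendsto_zero: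
  fixes y y' \<mu> g :: "real \<Rightarrow> real"
  assumes y_deriv: "eventually (\<lambda>s. (y has_real_derivative y' s) (at s)) at_top"
    and damped: "eventually (\<lambda>s. y' s = - \<mu> s * y s + g s) at_top"
    and \<mu>_ge: "eventually (\<lambda>s. \<mu> s \<ge> M) at_top" and "M > 0"
    and g_small: "((\<lambda>s. g s / \<mu> s) \<longlongrightarrow> 0) at_top"
  shows "(y \<longlongrightarrow> 0) at_top"
proof (rule tendstoI)
  fix e :: real assume "e > 0"
  have "eventually (\<lambda>s. \<bar>g s / \<mu> s\<bar> < e / 4) at_top"
    using tendstoD[OF g_small, of "e / 4"] \<open>e > 0\<close> by simp
  with y_deriv damped \<mu>_ge have "eventually (\<lambda>s. (y has_real_derivative y' s) (at s) \<and>
      y' s = - \<mu> s * y s + g s \<and> \<mu> s \<ge> M \<and> \<bar>g s / \<mu> s\<bar> < e / 4) at_top"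
    by eventually_elim blast
  then obtain s0 where s0: "\<And>s. s \<ge> s0 \<Longrightarrow> (y has_real_derivative y' s) (at s) \<and>
      y' s = - \<mu> s * y s + g s \<and> \<mu> s \<ge> M \<and> \<bar>g s / \<mu> s\<bar> < e / 4"
    unfolding eventually_at_top_linorder by blast
  have decreasing: "2 * y s * y' s \<le> - (M * (e / 2)\<^sup>2)" if "s \<ge> s0" "(y s)\<^sup>2 > (e / 2)\<^sup>2" for s
  proof -
    from s0[OF that(1)] have y': "y' s = - \<mu> s * y s + g s" and "\<mu> s \<ge> M"
      and "\<bar>g s / \<mu> s\<bar> < e / 4" by auto
    then have "\<mu> s > 0" "\<bar>g s\<bar> \<le> e / 4 * \<mu> s"
      using \<open>M > 0\<close> by (auto simp: pos_divide_less_eq)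
    have "\<bar>y s\<bar> > e / 2"
      using that(2) \<open>e > 0\<close> by (metis power2_abs power_less_imp_less_base abs_ge_zero)
    have "2 * y s * y' s = - 2 * \<mu> s * (y s)\<^sup>2 + 2 * (g s * y s)"
      unfolding y' by (simp add: power2_eq_square algebra_simps)
    also have "\<dots> \<le> - 2 * \<mu> s * (y s)\<^sup>2 + 2 * (e / 4 * \<mu> s * \<bar>y s\<bar>)"
      using mult_right_mono[OF \<open>\<bar>g s\<bar> \<le> e / 4 * \<mu> s\<close> abs_ge_zero[of "y s"]]
      by (simp add: abs_mult[symmetric])
    also have "\<dots> \<le> - \<mu> s * (y s)\<^sup>2"
    proof -
      have "e / 2 * \<bar>y s\<bar> \<le> \<bar>y s\<bar> * \<bar>y s\<bar>"
        using \<open>\<bar>y s\<bar> > e / 2\<close> by (intro mult_right_mono) auto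
      then have "\<mu> s * (e / 2 * \<bar>y s\<bar>) \<le> \<mu> s * (y s)\<^sup>2"
        using \<open>\<mu> s > 0\<close> by (simp add: power2_eq_square)
      then show ?thesis by (simp add: algebra_simps)
    qed
    also have "\<dots> \<le> - (M * (e / 2)\<^sup>2)"
      using mult_mono[OF \<open>\<mu> s \<ge> M\<close> less_imp_le[OF that(2)]] \<open>M > 0\<close> \<open>\<mu> s > 0\<close> by simp
    finally show ?thesis .
  qed
  have "((\<lambda>s. (y s)\<^sup>2) has_real_derivative 2 * y s * y' s) (at s)" if "s \<ge> s0" for s
    using s0[OF that] by (auto intro!: derivative_eq_intros)
  from eventually_below_if_decreasing_above[where th = "(e / 2)\<^sup>2", OF this _ decreasing]
  obtain t where "\<forall>s\<ge>t. (y s)\<^sup>2 \<le> (e / 2)\<^sup>2"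
    using \<open>M > 0\<close> \<open>e > 0\<close> by auto
  then have "\<forall>s\<ge>t. dist (y s) 0 < e"
    using \<open>e > 0\<close> by (simp add: abs_le_square_iff[symmetric]) (smt (verit))
  then show "eventually (\<lambda>s. dist (y s) 0 < e) at_top"
    unfolding eventually_at_top_linorder by blast
qed

lemma positive_if_eventually_positive_at_bot:
  fixes y y' :: "real \<Rightarrow> real"
  assumes y_deriv: "\<And>s. (y has_real_derivative y' s) (at s)"
    and increasing_at_zeros: "\<And>s. y s = 0 \<Longrightarrow> y' s > 0"
    and "eventually (\<lambda>s. y s > 0) at_bot"
  shows "y s > 0"
proof (rule ccontr)
  assume "\<not> y s > 0"
  obtain N where "\<And>t. t \<le> N \<Longrightarrow> y t > 0"
    using \<open>eventually (\<lambda>s. y s > 0) at_bot\<close> unfolding eventually_at_bot_linorder by blast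
  then obtain sb where "sb < s" "y sb > 0"
    using \<open>\<not> y s > 0\<close> by (metis linorder_not_le min.cobounded1 min_less_iff_conj)
  have cont: "continuous_on A y" for A
    by (meson y_deriv DERIV_continuous continuous_at_imp_continuous_on)
  define S where "S = {sb..s} \<inter> y -` {..0}"
  have "closed S" "bdd_below S" "s \<in> S"
    using cont \<open>sb < s\<close> \<open>\<not> y s > 0\<close> unfolding S_def
    by (auto intro: continuous_closed_preimage[of _ _ "{..0}"] bdd_belowI[of _ sb])
  then have "Inf S \<in> S" and Inf_le: "\<And>x. x \<in> S \<Longrightarrow> Inf S \<le> x"
    by (auto intro: closed_contains_Inf cInf_lower)
  then have t0: "sb < Inf S" "Inf S \<le> s" "y (Inf S) \<le> 0"
    using \<open>y sb > 0\<close> unfolding S_def by (auto simp: le_less)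
  have "y (Inf S) = 0"
  proof (rule ccontr)
    assume "y (Inf S) \<noteq> 0"
    then obtain x where "sb \<le> x" "x \<le> Inf S" "y x = 0"
      using IVT2'[of y "Inf S" 0 sb] t0 \<open>y sb > 0\<close> cont by force
    then show False
      using Inf_le[of x] t0 \<open>y (Inf S) \<noteq> 0\<close> by (auto simp: S_def)
  qed
  then obtain d where "d > 0" and d: "\<And>h. h > 0 \<Longrightarrow> h < d \<Longrightarrow> y (Inf S - h) < 0"
    using DERIV_pos_inc_left[OF y_deriv increasing_at_zeros] by metis
  define h where "h = min (d / 2) (Inf S - sb)"
  have h: "0 < h" "h < d" "h \<le> Inf S - sb"
    using t0 \<open>d > 0\<close> by (auto simp: h_def)
  then have "Inf S - h \<in> S"
    using d[of h] t0 unfolding S_def by auto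
  then show False
    using Inf_le[of "Inf S - h"] h(1) by linarith
qed

locale log_system =
  fixes m \<gamma> c C0 A c1 K :: real and w y :: "real \<Rightarrow> real"
  assumes w_deriv: "\<And>s. (w has_real_derivative (1 - m) * w s * y s) (at s)"
    and y_deriv: "\<And>s. (y has_real_derivative - y s * (\<gamma> * w s + m * y s + c) + C0) (at s)"
    and w_pos: "\<And>s. w s > 0" and y_pos: "\<And>s. y s > 0"
    and m_pos: "0 < m" and m_less_1: "m < 1" and \<gamma>_pos: "\<gamma> > 0" and A_pos: "A > 0"
    and C0_eq: "(1 - m) * C0 = \<gamma> * A" and c1_eq: "c1 = c / \<gamma>"
    and w_asymp: "((\<lambda>s. w s - A * s + c1 * ln s) \<longlongrightarrow> K) at_top"
begin

lemma w_over_s_tendsto: "((\<lambda>s. w s / s) \<longlongrightarrow> A) at_top"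
proof -
  have "((\<lambda>s. (w s - A * s + c1 * ln s) * (1 / s) + A - c1 * (ln s / s)) \<longlongrightarrow> K * 0 + A - c1 * 0) at_top"
    by (intro tendsto_intros w_asymp) real_asymp+
  moreover have "eventually (\<lambda>s. (w s - A * s + c1 * ln s) * (1 / s) + A - c1 * (ln s / s) = w s / s) at_top"
    using eventually_gt_at_top[of 0] by eventually_elim (simp add: field_simps)
  ultimately show ?thesis
    by (simp add: tendsto_cong)
qed

lemma w_tendsto_at_top: "filterlim w at_top at_top"
proof -
  have "filterlim (\<lambda>s. w s / s * s) at_top at_top"
    using filterlim_tendsto_pos_mult_at_top[OF w_over_s_tendsto A_pos filterlim_ident] .
  moreover have "eventually (\<lambda>s. w s / s * s = w s) at_top"
    using eventually_gt_at_top[of 0] by eventually_elim simp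
  ultimately show ?thesis
    using filterlim_cong by fastforce
qed

lemma \<gamma>_w_at_infinity: "filterlim (\<lambda>s. \<gamma> * w s) at_infinity at_top"
  by (intro filterlim_at_top_imp_at_infinity filterlim_tendsto_pos_mult_at_top[OF tendsto_const \<gamma>_pos w_tendsto_at_top])

lemma damped_by_w_tendsto_zero:
  assumes "eventually (\<lambda>s. (f has_real_derivative - (\<gamma> * w s) * f s + h s) (at s)) at_top"
    and "((\<lambda>s. h s / (\<gamma> * w s)) \<longlongrightarrow> 0) at_top"
  shows "(f \<longlongrightarrow> 0) at_top"
proof (rule damped_linear_tendsto_zero[where \<mu> = "\<lambda>s. \<gamma> * w s" and M = 1])
  show "eventually (\<lambda>s. \<gamma> * w s \<ge> 1) at_top"
    using filterlim_tendsto_pos_mult_at_top[OF tendsto_const \<gamma>_pos w_tendsto_at_top]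
    by (simp add: filterlim_at_top)
qed (use assms in auto)

lemma y_tendsto_zero: "(y \<longlongrightarrow> 0) at_top"
proof (rule damped_linear_tendsto_zero[where \<mu> = "\<lambda>s. \<gamma> * w s + m * y s + c" and g = "\<lambda>_. C0" and M = 1
      and y' = "\<lambda>s. - y s * (\<gamma> * w s + m * y s + c) + C0"])
  have "filterlim (\<lambda>s. c + \<gamma> * w s) at_top at_top"
    by (intro filterlim_tendsto_add_at_top[OF tendsto_const]
        filterlim_tendsto_pos_mult_at_top[OF tendsto_const \<gamma>_pos w_tendsto_at_top])
  then have "filterlim (\<lambda>s. \<gamma> * w s + m * y s + c) at_top at_top"
    by (rule filterlim_at_top_mono) (use m_pos y_pos in \<open>auto intro!: always_eventually less_imp_le\<close>)
  then show "eventually (\<lambda>s. \<gamma> * w s + m * y s + c \<ge> 1) at_top"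
    and "((\<lambda>s. C0 / (\<gamma> * w s + m * y s + c)) \<longlongrightarrow> 0) at_top"
    by (auto simp: filterlim_at_top_imp_at_infinity intro!: tendsto_divide_0[OF tendsto_const])
      (simp add: filterlim_at_top)
qed (use y_deriv in \<open>auto simp: algebra_simps\<close>)

definition dw :: "real \<Rightarrow> real" where
  "dw s = (1 - m) * w s * y s"

definition dw_forcing :: "real \<Rightarrow> real" where
  "dw_forcing s = (1 - m) * w s * ((1 - 2 * m) * (y s)\<^sup>2 - c * y s)"

lemma dw_deriv: "(dw has_real_derivative - (\<gamma> * w s) * (dw s - A) + dw_forcing s) (at s)"
proof -
  have "(dw has_real_derivative
      (1 - m) * ((1 - m) * w s * y s * y s + (- y s * (\<gamma> * w s + m * y s + c) + C0) * w s)) (at s)"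
    using DERIV_cmult[OF DERIV_mult[OF w_deriv y_deriv], of "1 - m"]
    unfolding dw_def[abs_def] by (simp add: mult.assoc)
  moreover have "(1 - m) * C0 * w s = \<gamma> * A * w s"
    using C0_eq by simp
  ultimately show ?thesis
    unfolding dw_def dw_forcing_def by (simp add: algebra_simps power2_eq_square)
qed

lemma dw_tendsto: "(dw \<longlongrightarrow> A) at_top"
proof -
  have "((\<lambda>s. dw s - A) \<longlongrightarrow> 0) at_top"
  proof (rule damped_by_w_tendsto_zero)
    show "eventually (\<lambda>s. ((\<lambda>s. dw s - A) has_real_derivative
        - (\<gamma> * w s) * (dw s - A) + dw_forcing s) (at s)) at_top"
      using DERIV_diff[OF dw_deriv DERIV_const] by simp
    have "((\<lambda>s. (1 - m) * ((1 - 2 * m) * (y s)\<^sup>2 - c * y s) / \<gamma>) \<longlongrightarrow>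
        (1 - m) * ((1 - 2 * m) * 0\<^sup>2 - c * 0) / \<gamma>) at_top"
      by (intro tendsto_intros y_tendsto_zero) (use \<gamma>_pos in simp)
    moreover have "dw_forcing s / (\<gamma> * w s) = (1 - m) * ((1 - 2 * m) * (y s)\<^sup>2 - c * y s) / \<gamma>" for s
      using w_pos[of s] \<gamma>_pos by (simp add: dw_forcing_def)
    ultimately show "((\<lambda>s. dw_forcing s / (\<gamma> * w s)) \<longlongrightarrow> 0) at_top"
      by simp
  qed
  then show ?thesis
    by (simp add: LIM_zero_iff)
qed

lemma s_y_tendsto: "((\<lambda>s. s * y s) \<longlongrightarrow> 1 / (1 - m)) at_top"
proof -
  have "((\<lambda>s. dw s / (w s / s) / (1 - m)) \<longlongrightarrow> A / A / (1 - m)) at_top"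
    by (intro tendsto_intros dw_tendsto w_over_s_tendsto) (use A_pos m_less_1 in auto)
  moreover have "eventually (\<lambda>s. dw s / (w s / s) / (1 - m) = s * y s) at_top"
    using eventually_gt_at_top[of 0]
    by eventually_elim (use m_less_1 in \<open>simp add: dw_def less_imp_neq[OF w_pos, symmetric]\<close>)
  ultimately show ?thesis
    using A_pos by (simp add: tendsto_cong)
qed

lemma first_order_tendsto: "((\<lambda>s. s * (dw s - A) + c1) \<longlongrightarrow> 0) at_top"
proof (rule damped_by_w_tendsto_zero)
  define h where "h s = (dw s - A) + s * dw_forcing s + \<gamma> * w s * c1" for s
  show "eventually (\<lambda>s. ((\<lambda>s. s * (dw s - A) + c1) has_real_derivative
      - (\<gamma> * w s) * (s * (dw s - A) + c1) + h s) (at s)) at_top"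
    unfolding h_def
    using DERIV_add[OF DERIV_mult[OF DERIV_ident DERIV_diff[OF dw_deriv DERIV_const[of A]]] DERIV_const[of c1]]
    by (simp add: algebra_simps)
  have "((\<lambda>s. (dw s - A) * (1 / (\<gamma> * w s)) + (1 - m) * ((1 - 2 * m) * (s * y s) * y s - c * (s * y s)) / \<gamma> + c1)
      \<longlongrightarrow> 0 * 0 + (1 - m) * ((1 - 2 * m) * (1 / (1 - m)) * 0 - c * (1 / (1 - m))) / \<gamma> + c1) at_top"
    using dw_tendsto
    by (intro tendsto_intros s_y_tendsto y_tendsto_zero tendsto_divide_0[OF tendsto_const \<gamma>_w_at_infinity])
      (use \<gamma>_pos in \<open>auto simp: LIM_zero_iff\<close>)
  moreover have "(1 - m) * ((1 - 2 * m) * (1 / (1 - m)) * 0 - c * (1 / (1 - m))) / \<gamma> + c1 = 0"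
    using m_less_1 by (simp add: c1_eq)
  moreover have "(dw s - A) * (1 / (\<gamma> * w s)) + (1 - m) * ((1 - 2 * m) * (s * y s) * y s - c * (s * y s)) / \<gamma> + c1
      = h s / (\<gamma> * w s)" for s
    using w_pos[of s] \<gamma>_pos unfolding h_def dw_forcing_def by (simp add: field_simps power2_eq_square)
  ultimately show "((\<lambda>s. h s / (\<gamma> * w s)) \<longlongrightarrow> 0) at_top"
    by simp
qed

lemma log_correction_tendsto:
  "((\<lambda>s. c1 * s * (1 - (1 - m) * s * y s) + c1\<^sup>2 / A * ln s) \<longlongrightarrow> (c1 * K + c1\<^sup>2) / A) at_top"
proof -
  define R where "R s = w s - A * s + c1 * ln s" for s
  define P where "P s = s * (dw s - A) + c1" for s
  have ln_lim: "((\<lambda>s::real. ln s / s) \<longlongrightarrow> 0) at_top"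
    by real_asymp
  have ln2_lim: "((\<lambda>s::real. (ln s)\<^sup>2 / s) \<longlongrightarrow> 0) at_top"
    by real_asymp
  have "((\<lambda>s. (c1 * R s - c1 * P s + c1\<^sup>2 + c1\<^sup>2 / A * R s * (ln s / s) - c1 ^ 3 / A * ((ln s)\<^sup>2 / s))
      / (w s / s)) \<longlongrightarrow> (c1 * K - c1 * 0 + c1\<^sup>2 + c1\<^sup>2 / A * K * 0 - c1 ^ 3 / A * 0) / A) at_top"
    using w_asymp first_order_tendsto A_pos unfolding R_def P_def
    by (intro tendsto_intros w_over_s_tendsto ln_lim ln2_lim) auto
  moreover have "eventually (\<lambda>s.
      (c1 * R s - c1 * P s + c1\<^sup>2 + c1\<^sup>2 / A * R s * (ln s / s) - c1 ^ 3 / A * ((ln s)\<^sup>2 / s)) / (w s / s)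
      = c1 * s * (1 - (1 - m) * s * y s) + c1\<^sup>2 / A * ln s) at_top"
    using eventually_gt_at_top[of 0]
  proof eventually_elim
    case (elim s)
    then show ?case
      using w_pos[of s] A_pos unfolding R_def P_def dw_def
      by (simp add: field_simps power2_eq_square power3_eq_cube)
  qed
  ultimately show ?thesis
    by (simp add: tendsto_cong)
qed

lemma second_order_tendsto:
  "((\<lambda>s. s\<^sup>2 * (dw s - A) + c1 * s + c1\<^sup>2 / A * ln s) \<longlongrightarrow>
     c1\<^sup>2 / A + c1 * K / A + (1 - 2 * m) / ((1 - m) * \<gamma>)) at_top"
proof -
  define L where "L = c1\<^sup>2 / A + c1 * K / A + (1 - 2 * m) / ((1 - m) * \<gamma>)"
  define P where "P s = s * (dw s - A) + c1" for s
  define T where "T s = (1 - m) * s * y s" for s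
  define h where "h s = 2 * (P s - c1) + c1 + c1\<^sup>2 / A * (1 / s) + s\<^sup>2 * dw_forcing s
    + \<gamma> * w s * (c1 * s + c1\<^sup>2 / A * ln s - L)" for s
  have "((\<lambda>s. s\<^sup>2 * (dw s - A) + c1 * s + c1\<^sup>2 / A * ln s - L) \<longlongrightarrow> 0) at_top"
  proof (rule damped_by_w_tendsto_zero)
    show "eventually (\<lambda>s. ((\<lambda>s. s\<^sup>2 * (dw s - A) + c1 * s + c1\<^sup>2 / A * ln s - L) has_real_derivative
        - (\<gamma> * w s) * (s\<^sup>2 * (dw s - A) + c1 * s + c1\<^sup>2 / A * ln s - L) + h s) (at s)) at_top"
      using eventually_gt_at_top[of 0]
    proof eventually_elim
      case (elim s)
      show ?case
        unfolding h_def P_def using elim A_pos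
        by (auto intro!: derivative_eq_intros dw_deriv simp: power2_eq_square field_simps)
    qed
    have "((\<lambda>s. (2 * (P s - c1) + c1 + c1\<^sup>2 / A * (1 / s)) / (\<gamma> * w s)
        + (1 - 2 * m) / (1 - m) * (T s)\<^sup>2 / \<gamma> - L + (c1 * s * (1 - T s) + c1\<^sup>2 / A * ln s))
        \<longlongrightarrow> 0 + (1 - 2 * m) / (1 - m) * 1\<^sup>2 / \<gamma> - L + (c1 * K + c1\<^sup>2) / A) at_top"
    proof (intro tendsto_intros tendsto_divide_0[OF _ \<gamma>_w_at_infinity])
      have "(P \<longlongrightarrow> 0) at_top" "((\<lambda>s::real. 1 / s) \<longlongrightarrow> 0) at_top"
        using first_order_tendsto by (simp_all add: P_def[abs_def]) real_asymp
      then show "((\<lambda>s. 2 * (P s - c1) + c1 + c1\<^sup>2 / A * (1 / s)) \<longlongrightarrow> 2 * (0 - c1) + c1 + c1\<^sup>2 / A * 0) at_top"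
        by (intro tendsto_intros)
      show "(T \<longlongrightarrow> 1) at_top"
        using tendsto_mult[OF tendsto_const[of "1 - m"] s_y_tendsto] m_less_1
        by (simp add: T_def[abs_def] mult.assoc)
      show "((\<lambda>s. c1 * s * (1 - T s) + c1\<^sup>2 / A * ln s) \<longlongrightarrow> (c1 * K + c1\<^sup>2) / A) at_top"
        using log_correction_tendsto unfolding T_def .
    qed (use \<gamma>_pos in simp)
    moreover have "0 + (1 - 2 * m) / (1 - m) * 1\<^sup>2 / \<gamma> - L + (c1 * K + c1\<^sup>2) / A = 0"
      using A_pos by (simp add: L_def field_simps power2_eq_square)
    moreover have "(2 * (P s - c1) + c1 + c1\<^sup>2 / A * (1 / s)) / (\<gamma> * w s)
        + (1 - 2 * m) / (1 - m) * (T s)\<^sup>2 / \<gamma> - L + (c1 * s * (1 - T s) + c1\<^sup>2 / A * ln s)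
        = h s / (\<gamma> * w s)" for s
    proof -
      have "h s / (\<gamma> * w s)
          = (2 * (P s - c1) + c1 + c1\<^sup>2 / A * (1 / s)) / (\<gamma> * w s) + s\<^sup>2 * dw_forcing s / (\<gamma> * w s)
            + (c1 * s + c1\<^sup>2 / A * ln s - L)"
        unfolding h_def using w_pos[of s] \<gamma>_pos by (simp add: add_divide_distrib)
      also have "s\<^sup>2 * dw_forcing s / (\<gamma> * w s) = (1 - 2 * m) / (1 - m) * (T s)\<^sup>2 / \<gamma> - c1 * s * T s"
        unfolding dw_forcing_def T_def c1_eq using w_pos[of s] \<gamma>_pos m_less_1
        by (simp add: field_simps power2_eq_square)
      finally show ?thesis
        by (simp add: algebra_simps)
    qed
    ultimately show "((\<lambda>s. h s / (\<gamma> * w s)) \<longlongrightarrow> 0) at_top"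
      by simp
  qed
  from tendsto_add[OF this tendsto_const[of L]] show ?thesis
    by (simp add: L_def)
qed

end

lemma w_fun_deriv:
  assumes "v (exp s) > 0" and "(v has_real_derivative v') (at (exp s))" and "m \<noteq> 1"
  shows "(w_fun m v has_real_derivative
           (1 - m) * w_fun m v s * (exp s * v' / v (exp s) + 2 / (1 - m))) (at s)"
proof -
  have e2: "((\<lambda>s. (exp s)\<^sup>2) has_real_derivative 2 * exp s * exp s) (at s)"
    by (auto intro!: derivative_eq_intros)
  have "((\<lambda>s. v (exp s)) has_real_derivative v' * exp s) (at s)"
    using DERIV_chain2[OF assms(2) DERIV_exp] .
  from DERIV_mult[OF e2 DERIV_fun_powr[OF this assms(1)]]
  have "(w_fun m v has_real_derivative
      2 * exp s * exp s * v (exp s) powr (1 - m)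
      + (1 - m) * v (exp s) powr (1 - m - of_nat 1) * (v' * exp s) * (exp s)\<^sup>2) (at s)"
    unfolding w_fun_def[abs_def] .
  moreover have "v (exp s) powr (1 - m - of_nat 1) = v (exp s) powr (1 - m) / v (exp s)"
    using assms(1) by (simp add: powr_diff powr_minus_divide)
  moreover have "2 * e * e * P + (1 - m) * (P / V) * (v' * e) * e\<^sup>2
      = (1 - m) * (e\<^sup>2 * P) * (e * v' / V + 2 / (1 - m))" if "V \<noteq> 0" for e P V :: real
    using that assms(3) by (simp add: field_simps power2_eq_square)
  ultimately show ?thesis
    using assms(1) unfolding w_fun_def by simp
qed

lemma radial_equation_quotient_rule:
  fixes e a b U V m N \<beta> :: real
  assumes "e > 0" "U > 0" "V > 0" "m \<noteq> 0" "m \<noteq> 1" "N \<noteq> 1"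
    and eq: "(N - 1) / m * (b + (N - 1) / e * a) + 2 * \<beta> / (1 - m) * V + \<beta> * e * (a * V / (m * U)) = 0"
  shows "((e * a + b * e * e) * (m * U) - e * a * (m * (a * e))) / ((m * U) * (m * U))
    = - (N - 2) * (e * a / (m * U)) - m * (e * a / (m * U))\<^sup>2
      - \<beta> / (N - 1) * (e\<^sup>2 * V / U) * (e * a / (m * U) + 2 / (1 - m))"
proof -
  define \<psi> where "\<psi> = e * a / (m * U)"
  define W where "W = e\<^sup>2 * V / U"
  have "e\<^sup>2 / (j * U) * (j / m * (b + j / e * a) + 2 * \<beta> / k * V + \<beta> * e * (a * V / (m * U)))
      = e\<^sup>2 * b / (m * U) + j * \<psi> + \<beta> / j * W * (\<psi> + 2 / k)" if "k \<noteq> 0" "j \<noteq> 0" for k j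
    unfolding \<psi>_def W_def using assms(1-4) that by (simp add: field_simps power2_eq_square)
  from this[of "1 - m" "N - 1"] assms(5,6)
  have "e\<^sup>2 / ((N - 1) * U) * ((N - 1) / m * (b + (N - 1) / e * a) + 2 * \<beta> / (1 - m) * V
      + \<beta> * e * (a * V / (m * U)))
      = e\<^sup>2 * b / (m * U) + (N - 1) * \<psi> + \<beta> / (N - 1) * W * (\<psi> + 2 / (1 - m))"
    by simp
  then have "e\<^sup>2 * b / (m * U) = - (N - 1) * \<psi> - \<beta> / (N - 1) * W * (\<psi> + 2 / (1 - m))"
    unfolding eq by (simp add: algebra_simps)
  moreover have "((e * a + b * e * e) * (m * U) - e * a * (m * (a * e))) / ((m * U) * (m * U))
      = \<psi> + e\<^sup>2 * b / (m * U) - m * \<psi>\<^sup>2"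
    unfolding \<psi>_def using assms(2,4) by (simp add: field_simps power2_eq_square)
  ultimately show ?thesis
    unfolding \<psi>_def[symmetric] W_def[symmetric] by (simp add: algebra_simps)
qed

lemma radial_log_derivative_deriv:
  fixes N m \<beta> :: real and v v1 u1 u2 :: "real \<Rightarrow> real"
  assumes "m \<noteq> 0" "m \<noteq> 1" "N \<noteq> 1"
    and v_pos: "\<And>r. r > 0 \<Longrightarrow> v r > 0"
    and v_deriv: "\<And>r. r > 0 \<Longrightarrow> (v has_real_derivative v1 r) (at r)"
    and vm_deriv: "\<And>r. r > 0 \<Longrightarrow> ((\<lambda>t. v t powr m) has_real_derivative u1 r) (at r)"
    and u1_deriv: "\<And>r. r > 0 \<Longrightarrow> (u1 has_real_derivative u2 r) (at r)"
    and equation: "\<And>r. r > 0 \<Longrightarrow>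
      (N - 1) / m * (u2 r + (N - 1) / r * u1 r) + 2 * \<beta> / (1 - m) * v r + \<beta> * r * v1 r = 0"
  defines "\<psi> \<equiv> \<lambda>s. exp s * v1 (exp s) / v (exp s)"
  shows "(\<psi> has_real_derivative
    - (N - 2) * \<psi> s - m * (\<psi> s)\<^sup>2 - \<beta> / (N - 1) * w_fun m v s * (\<psi> s + 2 / (1 - m))) (at s)"
proof -
  define U where "U s = v (exp s) powr m" for s
  have U_pos: "U s > 0" for s
    using v_pos[of "exp s"] by (simp add: U_def)
  have v1_eq: "v1 (exp s) = u1 (exp s) * v (exp s) / (m * U s)" for s
  proof -
    have "u1 (exp s) = m * v (exp s) powr (m - of_nat 1) * v1 (exp s)"
      using DERIV_unique[OF vm_deriv DERIV_fun_powr[OF v_deriv v_pos]] by simp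
    then show ?thesis
      using v_pos[of "exp s"] assms(1) by (simp add: U_def powr_diff field_simps)
  qed
  txt \<open>Only \<open>(v\<^sup>m)'\<close> is known to be differentiable, so \<open>\<psi>\<close> is differentiated in this form.\<close>
  have \<psi>_eq: "\<psi> = (\<lambda>s. exp s * u1 (exp s) / (m * U s))"
  proof
    fix s
    show "\<psi> s = exp s * u1 (exp s) / (m * U s)"
      using v_pos[of "exp s"] by (simp add: \<psi>_def v1_eq)
  qed
  have w_eq: "w_fun m v s = (exp s)\<^sup>2 * v (exp s) / U s"
    using v_pos[of "exp s"] by (simp add: w_fun_def U_def powr_diff)
  have d1: "((\<lambda>s. exp s * u1 (exp s)) has_real_derivative
      exp s * u1 (exp s) + u2 (exp s) * exp s * exp s) (at s)"
    using DERIV_mult[OF DERIV_exp DERIV_chain2[OF u1_deriv[OF exp_gt_zero] DERIV_exp]]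
    by (simp add: algebra_simps)
  have d2: "((\<lambda>s. m * U s) has_real_derivative m * (u1 (exp s) * exp s)) (at s)"
    unfolding U_def by (intro DERIV_cmult DERIV_chain2[OF vm_deriv[OF exp_gt_zero] DERIV_exp])
  have "(\<psi> has_real_derivative
      ((exp s * u1 (exp s) + u2 (exp s) * exp s * exp s) * (m * U s)
        - exp s * u1 (exp s) * (m * (u1 (exp s) * exp s))) / ((m * U s) * (m * U s))) (at s)"
    unfolding \<psi>_eq by (rule DERIV_divide[OF d1 d2]) (use U_pos[of s] assms(1) in simp)
  moreover have "(N - 1) / m * (u2 (exp s) + (N - 1) / exp s * u1 (exp s)) + 2 * \<beta> / (1 - m) * v (exp s)
      + \<beta> * exp s * (u1 (exp s) * v (exp s) / (m * U s)) = 0"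
    using equation[of "exp s"] by (simp add: v1_eq)
  note radial_equation_quotient_rule[OF exp_gt_zero U_pos v_pos[OF exp_gt_zero] assms(1-3) this]
  ultimately show ?thesis
    unfolding w_eq \<psi>_eq by simp
qed

lemma radial_sol_log_ode:
  fixes n :: nat
  assumes sol: "radial_sol n m \<beta> lam v" and "0 < m" "m < 1" "real n > 1"
  obtains y where
    "\<And>s. (w_fun m v has_real_derivative (1 - m) * w_fun m v s * y s) (at s)"
    "\<And>s. (y has_real_derivative - y s * (\<beta> / (real n - 1) * w_fun m v s + m * y s
        + (real n - 2 - (real n + 2) * m) / (1 - m)) + 2 * (real n - 2 - real n * m) / (1 - m)\<^sup>2) (at s)"
    "(y \<longlongrightarrow> 2 / (1 - m)) at_bot"
proof -
  obtain v1 u1 u2 where v_pos: "\<And>r. r \<ge> 0 \<Longrightarrow> v r > 0" and "v 0 = lam"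
    and "continuous_on {0..} v"
    and H: "\<And>r. r > 0 \<Longrightarrow> (v has_real_derivative v1 r) (at r) \<and>
               ((\<lambda>t. v t powr m) has_real_derivative u1 r) (at r) \<and>
               (u1 has_real_derivative u2 r) (at r) \<and>
               (real n - 1) / m * (u2 r + (real n - 1) / r * u1 r)
                 + 2 * \<beta> / (1 - m) * v r + \<beta> * r * v1 r = 0"
    and "(v1 \<longlongrightarrow> 0) (at_right 0)"
    using sol unfolding radial_sol_def by blast
  define \<psi> where "\<psi> = (\<lambda>s. exp s * v1 (exp s) / v (exp s))"
  show thesis
  proof (rule that[of "\<lambda>s. \<psi> s + 2 / (1 - m)"])
    show "(w_fun m v has_real_derivative (1 - m) * w_fun m v s * (\<psi> s + 2 / (1 - m))) (at s)" for s
      unfolding \<psi>_def using w_fun_deriv[of v s "v1 (exp s)" m] v_pos H assms(3) by simp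
    txt \<open>\<open>k\<close> stands for \<open>1 - m\<close>, kept atomic so that \<open>field_simps\<close> sees the denominators.\<close>
    have ode_in_y: "- (N - 2) * \<psi> - m * \<psi>\<^sup>2 - \<gamma> * W * (\<psi> + 2 / k)
        = - (\<psi> + 2 / k) * (\<gamma> * W + m * (\<psi> + 2 / k) + (N - 2 - (N + 2) * m) / k)
          + 2 * (N - 2 - N * m) / k\<^sup>2"
      if "k \<noteq> 0" "m = 1 - k" for N \<psi> \<gamma> W k :: real
      using that(1) unfolding that(2) by (simp add: field_simps power2_eq_square)
    have m_eq: "m = 1 - (1 - m)" and "1 - m \<noteq> 0"
      using assms(3) by simp_all
    fix s
    have "(\<psi> has_real_derivative - (real n - 2) * \<psi> s - m * (\<psi> s)\<^sup>2
        - \<beta> / (real n - 1) * w_fun m v s * (\<psi> s + 2 / (1 - m))) (at s)"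
      unfolding \<psi>_def by (rule radial_log_derivative_deriv) (use H v_pos assms(2-4) in auto)
    from DERIV_add[OF this DERIV_const[of "2 / (1 - m)"], unfolded add_0_right]
    show "((\<lambda>s. \<psi> s + 2 / (1 - m)) has_real_derivative - (\<psi> s + 2 / (1 - m)) *
        (\<beta> / (real n - 1) * w_fun m v s + m * (\<psi> s + 2 / (1 - m)) + (real n - 2 - (real n + 2) * m) / (1 - m))
        + 2 * (real n - 2 - real n * m) / (1 - m)\<^sup>2) (at s)"
      unfolding ode_in_y[OF \<open>1 - m \<noteq> 0\<close> m_eq, symmetric] .
    have "((\<lambda>r. r * v1 r / v r) \<longlongrightarrow> 0 * 0 / lam) (at_right 0)"
    proof (intro tendsto_intros \<open>(v1 \<longlongrightarrow> 0) (at_right 0)\<close>)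
      have "(v \<longlongrightarrow> v 0) (at 0 within {0..})"
        using \<open>continuous_on {0..} v\<close> by (simp add: continuous_on_def)
      then show "(v \<longlongrightarrow> lam) (at_right 0)"
        using \<open>v 0 = lam\<close> by (auto intro: tendsto_within_subset)
    qed (use v_pos[of 0] \<open>v 0 = lam\<close> in auto)
    moreover have "filterlim exp (at_right (0::real)) at_bot"
      by (simp add: filterlim_at exp_at_bot)
    ultimately have "(\<psi> \<longlongrightarrow> 0) at_bot"
      unfolding \<psi>_def using filterlim_compose by force
    then show "((\<lambda>s. \<psi> s + 2 / (1 - m)) \<longlongrightarrow> 2 / (1 - m)) at_bot"
      using tendsto_add[OF _ tendsto_const, of \<psi> 0 at_bot "2 / (1 - m)"] by simp
  qed
qed

definition w_slope :: "nat \<Rightarrow> real \<Rightarrow> real \<Rightarrow> real" where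
  "w_slope n m \<beta> = 2 * (real n - 1) * (real n - 2 - real n * m) / ((1 - m) * \<beta>)"

definition w_log_coeff :: "nat \<Rightarrow> real \<Rightarrow> real \<Rightarrow> real" where
  "w_log_coeff n m \<beta> = (real n - 1) * (real n - 2 - (real n + 2) * m) / ((1 - m) * \<beta>)"

lemma radial_coefficient_identities:
  fixes n :: nat and m \<beta> K :: real
  assumes "m \<noteq> 1" "\<beta> \<noteq> 0" "real n \<noteq> 1" "real n - 2 - real n * m \<noteq> 0"
  shows "(real n - 1) * (real n - 2 - (real n + 2) * m)\<^sup>2 / (2 * (real n - 2 - real n * m) * (1 - m) * \<beta>)
      = (w_log_coeff n m \<beta>)\<^sup>2 / w_slope n m \<beta>"
    and "(1 - m) * a1_fun n m \<beta> K / (2 * (real n - 2 - real n * m) * \<beta>)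
      = (w_log_coeff n m \<beta>)\<^sup>2 / w_slope n m \<beta> + w_log_coeff n m \<beta> * K / w_slope n m \<beta>
        + (1 - 2 * m) / ((1 - m) * (\<beta> / (real n - 1)))"
    and "(1 - m) * (2 * (real n - 2 - real n * m) / (1 - m)\<^sup>2) = \<beta> / (real n - 1) * w_slope n m \<beta>"
    and "w_log_coeff n m \<beta> = (real n - 2 - (real n + 2) * m) / (1 - m) / (\<beta> / (real n - 1))"
proof -
  txt \<open>\<open>k\<close> and \<open>j\<close> stand for \<open>1 - m\<close> and \<open>n - 1\<close>, kept atomic so that \<open>field_simps\<close> sees the
    denominators.\<close>
  have generic: "j * E\<^sup>2 / (2 * D * k * \<beta>) = (j * E / (k * \<beta>))\<^sup>2 / (2 * j * D / (k * \<beta>))"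
    "k * (2 * p * j * D / k\<^sup>2 + j * E\<^sup>2 / k\<^sup>2 + E / k * K * \<beta>) / (2 * D * \<beta>)
      = (j * E / (k * \<beta>))\<^sup>2 / (2 * j * D / (k * \<beta>)) + j * E / (k * \<beta>) * K / (2 * j * D / (k * \<beta>))
        + p / (k * (\<beta> / j))"
    "k * (2 * D / k\<^sup>2) = \<beta> / j * (2 * j * D / (k * \<beta>))"
    "j * E / (k * \<beta>) = E / k / (\<beta> / j)"
    if "k \<noteq> 0" "j \<noteq> 0" "D \<noteq> 0" for k j D E p :: real
    using that assms(2) by (simp_all add: field_simps power2_eq_square)
  show "(real n - 1) * (real n - 2 - (real n + 2) * m)\<^sup>2 / (2 * (real n - 2 - real n * m) * (1 - m) * \<beta>)
      = (w_log_coeff n m \<beta>)\<^sup>2 / w_slope n m \<beta>"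
    unfolding w_slope_def w_log_coeff_def by (rule generic(1)) (use assms(1,3,4) in auto)
  show "(1 - m) * a1_fun n m \<beta> K / (2 * (real n - 2 - real n * m) * \<beta>)
      = (w_log_coeff n m \<beta>)\<^sup>2 / w_slope n m \<beta> + w_log_coeff n m \<beta> * K / w_slope n m \<beta>
        + (1 - 2 * m) / ((1 - m) * (\<beta> / (real n - 1)))"
    unfolding w_slope_def w_log_coeff_def a1_fun_def by (rule generic(2)) (use assms(1,3,4) in auto)
  show "(1 - m) * (2 * (real n - 2 - real n * m) / (1 - m)\<^sup>2) = \<beta> / (real n - 1) * w_slope n m \<beta>"
    unfolding w_slope_def by (rule generic(3)) (use assms(1,3,4) in auto)
  show "w_log_coeff n m \<beta> = (real n - 2 - (real n + 2) * m) / (1 - m) / (\<beta> / (real n - 1))"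
    unfolding w_log_coeff_def by (rule generic(4)) (use assms(1,3,4) in auto)
qed

lemma radial_sol_w_deriv_asymptotics:
  fixes n :: nat
  assumes sol: "radial_sol n m \<beta> lam v" and "0 < m" and D_pos: "real n - 2 - real n * m > 0"
    and "\<beta> > 0" and h1_lim: "(h1_fun n m \<beta> v \<longlongrightarrow> K) at_top"
  obtains W' where "\<And>s. (w_fun m v has_real_derivative W' s) (at s)"
    and "((\<lambda>s. s\<^sup>2 * (W' s - w_slope n m \<beta>) + w_log_coeff n m \<beta> * s
            + (w_log_coeff n m \<beta>)\<^sup>2 / w_slope n m \<beta> * ln s)
          \<longlongrightarrow> (w_log_coeff n m \<beta>)\<^sup>2 / w_slope n m \<beta> + w_log_coeff n m \<beta> * K / w_slope n m \<beta>
            + (1 - 2 * m) / ((1 - m) * (\<beta> / (real n - 1)))) at_top"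
proof -
  have "real n > 2"
    using D_pos \<open>0 < m\<close> by (smt (verit) of_nat_0_le_iff mult_nonneg_nonneg)
  have "m < 1"
    using D_pos \<open>real n > 2\<close> by (smt (verit) mult_le_cancel_left1)
  define C0 where "C0 = 2 * (real n - 2 - real n * m) / (1 - m)\<^sup>2"
  obtain y where w_deriv: "\<And>s. (w_fun m v has_real_derivative (1 - m) * w_fun m v s * y s) (at s)"
    and y_deriv: "\<And>s. (y has_real_derivative - y s * (\<beta> / (real n - 1) * w_fun m v s + m * y s
        + (real n - 2 - (real n + 2) * m) / (1 - m)) + C0) (at s)"
    and "(y \<longlongrightarrow> 2 / (1 - m)) at_bot"
    using radial_sol_log_ode[OF sol \<open>0 < m\<close> \<open>m < 1\<close>] \<open>real n > 2\<close> unfolding C0_def by auto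
  have "C0 > 0"
    using D_pos \<open>m < 1\<close> by (simp add: C0_def)
  moreover have "eventually (\<lambda>s. y s > 0) at_bot"
    using order_tendstoD(1)[OF \<open>(y \<longlongrightarrow> 2 / (1 - m)) at_bot\<close>] \<open>m < 1\<close> by simp
  ultimately have y_pos: "y s > 0" for s
    by (intro positive_if_eventually_positive_at_bot[OF y_deriv]) auto
  note identities = radial_coefficient_identities[of m \<beta> n]
  interpret log_system m "\<beta> / (real n - 1)" "(real n - 2 - (real n + 2) * m) / (1 - m)" C0
    "w_slope n m \<beta>" "w_log_coeff n m \<beta>" K "w_fun m v" y
  proof
    have "v (exp s) \<noteq> 0" for s
      using sol unfolding radial_sol_def by (metis exp_ge_zero less_irrefl)
    then show "w_fun m v s > 0" for s
      by (simp add: w_fun_def)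
    show "w_slope n m \<beta> > 0"
      using D_pos \<open>m < 1\<close> \<open>real n > 2\<close> \<open>\<beta> > 0\<close> by (simp add: w_slope_def)
    show "(1 - m) * C0 = \<beta> / (real n - 1) * w_slope n m \<beta>"
      unfolding C0_def using identities(3) \<open>m < 1\<close> D_pos \<open>\<beta> > 0\<close> \<open>real n > 2\<close> by simp
    show "w_log_coeff n m \<beta> = (real n - 2 - (real n + 2) * m) / (1 - m) / (\<beta> / (real n - 1))"
      using identities(4) \<open>m < 1\<close> D_pos \<open>\<beta> > 0\<close> \<open>real n > 2\<close> by simp
    show "((\<lambda>s. w_fun m v s - w_slope n m \<beta> * s + w_log_coeff n m \<beta> * ln s) \<longlongrightarrow> K) at_top"
      using h1_lim unfolding h1_fun_def h_fun_def w_slope_def w_log_coeff_def by (simp add: mult.assoc)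
  qed (use w_deriv y_deriv y_pos \<open>0 < m\<close> \<open>\<beta> > 0\<close> \<open>m < 1\<close> \<open>real n > 2\<close> in auto)
  show thesis
    using that[OF w_deriv] second_order_tendsto unfolding dw_def .
qed

lemma deriv_h2_fun:
  fixes n :: nat and m \<beta> :: real
  assumes "m \<noteq> 1" "\<beta> \<noteq> 0" "real n \<noteq> 1" "real n - 2 - real n * m \<noteq> 0"
    and "s > 0" and "(w_fun m v has_real_derivative W') (at s)"
  shows "s\<^sup>2 * deriv (h2_fun n m \<beta> v K) s
    = s\<^sup>2 * (W' - w_slope n m \<beta>) + w_log_coeff n m \<beta> * s + (w_log_coeff n m \<beta>)\<^sup>2 / w_slope n m \<beta> * ln s"
proof -
  define A c1 c2 where "A = w_slope n m \<beta>" and "c1 = w_log_coeff n m \<beta>"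
    and "c2 = (w_log_coeff n m \<beta>)\<^sup>2 / w_slope n m \<beta>"
  have "h2_fun n m \<beta> v K = (\<lambda>s. w_fun m v s - A * s + c1 * ln s - K - c2 * ((1 + ln s) / s))"
    unfolding h2_fun_def h1_fun_def h_fun_def A_def c1_def c2_def
      radial_coefficient_identities(1)[OF assms(1-4), symmetric]
    by (simp add: w_slope_def w_log_coeff_def mult.assoc)
  moreover have "((\<lambda>s. w_fun m v s - A * s + c1 * ln s - K - c2 * ((1 + ln s) / s)) has_real_derivative
      W' - A + c1 / s + c2 * ln s / s\<^sup>2) (at s)"
    using assms(5,6) by (auto intro!: derivative_eq_intros simp: field_simps power2_eq_square)
  ultimately show ?thesis
    using assms(5) unfolding A_def c1_def c2_def
    by (simp add: DERIV_imp_deriv field_simps power2_eq_square)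
qed

theorem lemma2p7:
  fixes n :: nat and m \<beta> lam K :: real and v :: "real \<Rightarrow> real"
  assumes "n \<ge> 3"
    and "0 < m" and "m < (real n - 2) / real n"
    and "m \<noteq> (real n - 2) / (real n + 2)"
    and "lam > 0" and "\<beta> > 0"
    and "radial_sol n m \<beta> lam v"
    and "(h1_fun n m \<beta> v \<longlongrightarrow> K) at_top"
  shows "((\<lambda>s. s\<^sup>2 * deriv (h2_fun n m \<beta> v K) s) \<longlongrightarrow>
           (1 - m) * a1_fun n m \<beta> K / (2 * (real n - 2 - real n * m) * \<beta>)) at_top"
proof -
  have "real n \<ge> 3"
    using assms(1) by simp
  then have D_pos: "real n - 2 - real n * m > 0"
    using assms(3) by (simp add: field_simps)
  then have "m < 1"
    using \<open>real n \<ge> 3\<close> by (smt (verit) mult_le_cancel_left1)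
  obtain W' where W': "\<And>s. (w_fun m v has_real_derivative W' s) (at s)"
    and lim: "((\<lambda>s. s\<^sup>2 * (W' s - w_slope n m \<beta>) + w_log_coeff n m \<beta> * s
        + (w_log_coeff n m \<beta>)\<^sup>2 / w_slope n m \<beta> * ln s)
      \<longlongrightarrow> (w_log_coeff n m \<beta>)\<^sup>2 / w_slope n m \<beta> + w_log_coeff n m \<beta> * K / w_slope n m \<beta>
        + (1 - 2 * m) / ((1 - m) * (\<beta> / (real n - 1)))) at_top"
    using radial_sol_w_deriv_asymptotics[OF assms(7,2) D_pos assms(6,8)] by blast
  have nondegenerate: "m \<noteq> 1" "\<beta> \<noteq> 0" "real n \<noteq> 1" "real n - 2 - real n * m \<noteq> 0"
    using \<open>m < 1\<close> assms(6) \<open>real n \<ge> 3\<close> D_pos by auto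
  have "eventually (\<lambda>s. s\<^sup>2 * (W' s - w_slope n m \<beta>) + w_log_coeff n m \<beta> * s
      + (w_log_coeff n m \<beta>)\<^sup>2 / w_slope n m \<beta> * ln s = s\<^sup>2 * deriv (h2_fun n m \<beta> v K) s) at_top"
    using eventually_gt_at_top[of 0]
    by eventually_elim (simp add: deriv_h2_fun[OF nondegenerate _ W'])
  from tendsto_cong[THEN iffD1, OF this lim] show ?thesis
    unfolding radial_coefficient_identities(2)[OF nondegenerate] .
qed

end
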